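(* Let $p$ be an odd prime, $M$ the sub-add move matrix, and $k$ the $\mathbb Z_p$-order of $M$. Then $\Gamma_{M,\,p}$ contains secondary cycles if and only if $8$ does not divide $k$.
   Context: The sub-add move matrix is $M=\begin{pmatrix}1&-1\\1&1\end{pmatrix}$. $\Gamma_{M,\,p}$ is the directed graph with vertex set $\mathbb Z_p^2$ and arcs $((a,b),(a-b,a+b))$ (mod $p$; loops allowed). The $\mathbb Z_p$-order $k$ of $M$ is the least positive integer with $M^k\equiv I\pmod p$; it equals $4t$ where $t$ is the multiplicative order of $-4$ in $GF(p)$. A directed cycle is a cycle in the underlying undirected graph such that in the induced directed subgraph every vertex has in- and out-degree $1$; a loop is a directed $1$-cycle. A primary cycle is a directed cycle of length $k$; a secondary cycle is a directed cycle that is neither primary nor a $1$-cycle. *)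

theory Defs
  imports "HOL-Analysis.Analysis" "HOL-Number_Theory.Cong"
begin

definition subadd_matrix :: "int^2^2" where
  "subadd_matrix = (\<chi> i j. if i = 1 then (if j = 1 then 1 else -1) else 1)"

primrec mat_pow :: "int^2^2 \<Rightarrow> nat \<Rightarrow> int^2^2" where
  "mat_pow A 0 = mat 1"
| "mat_pow A (Suc n) = A ** mat_pow A n"

definition zp_order :: "int \<Rightarrow> nat" where
  "zp_order p = (LEAST k. k > 0 \<and>
      (\<forall>i j. [mat_pow subadd_matrix k $ i $ j = mat 1 $ i $ j] (mod p)))"

text \<open>Vertices of Gamma_{M,p}: Z_p^2, represented by pairs of residues 0..p-1.\<close>
definition gamma_vertices :: "int \<Rightarrow> (int \<times> int) set" where
  "gamma_vertices p = {0..<p} \<times> {0..<p}"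

definition gamma_arc :: "int \<Rightarrow> int \<times> int \<Rightarrow> int \<times> int \<Rightarrow> bool" where
  "gamma_arc p u v \<longleftrightarrow> u \<in> gamma_vertices p \<and>
      v = ((fst u - snd u) mod p, (fst u + snd u) mod p)"

text \<open>A directed cycle, given as the cyclic list of its (distinct) vertices
  v_0,...,v_{n-1} with arcs v_i -> v_{i+1 mod n}; length 1 is a loop.\<close>
definition directed_cycle :: "int \<Rightarrow> (int \<times> int) list \<Rightarrow> bool" where
  "directed_cycle p vs \<longleftrightarrow> vs \<noteq> [] \<and> distinct vs \<and> set vs \<subseteq> gamma_vertices p \<and>
      (\<forall>i < length vs. gamma_arc p (vs ! i) (vs ! ((i + 1) mod length vs)))"

definition secondary_cycle :: "int \<Rightarrow> (int \<times> int) list \<Rightarrow> bool" where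
  "secondary_cycle p vs \<longleftrightarrow> directed_cycle p vs \<and>
      length vs \<noteq> zp_order p \<and> length vs \<noteq> 1"

end

theory Submission
  imports Defs "HOL-Number_Theory.Pocklington"
begin

(* On Z^2 the move (a, b) -> (a - b, a + b) is multiplication by 1 + i on the Gaussian integers,
   so its fourth power is multiplication by -4. Hence M^k = I (mod p) exactly when k = 4m with
   (-4)^m = 1 (mod p), i.e. k = 4t for the order t of -4, and a nonzero vertex x returns to
   itself after 4m steps iff t divides m. Directed cycles are the orbits of the move, so the
   length d of a cycle through a nonzero vertex satisfies t | d | 4t. If t is even, a length
   d other than 1 and 4t would divide 2t = 4(t/2), forcing t | t/2. If t = 2s + 1 is odd,
   then M^(2t) = (-4)^s M^2 = c J with c = 2(-4)^s, J the rotation by 90 degrees and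
   -c^2 = (-4)^t = 1, so the vertex (1, c) lies on a cycle whose length divides 2t and is not 1,
   the only fixed point of the move being 0. *)

definition least_period :: "('a \<Rightarrow> 'a) \<Rightarrow> 'a \<Rightarrow> nat \<Rightarrow> bool" where
  "least_period f x d \<longleftrightarrow> 0 < d \<and> (f ^^ d) x = x \<and> (\<forall>j. 0 < j \<longrightarrow> j < d \<longrightarrow> (f ^^ j) x \<noteq> x)"

lemma least_period_dvd_iff:
  assumes "least_period f x d"
  shows "(f ^^ n) x = x \<longleftrightarrow> d dvd n"
proof -
  have "(f ^^ n) x = (f ^^ (n mod d)) x"
    using assms by (simp add: least_period_def funpow_mod_eq)
  moreover have "n mod d < d"
    using assms by (simp add: least_period_def)
  ultimately show ?thesis
    using assms unfolding least_period_def by (metis dvd_eq_mod_eq_0 funpow_0 gr0I)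
qed

lemma least_period_exists:
  assumes "(f ^^ n) x = x" and "0 < n"
  obtains d where "least_period f x d" and "d \<le> n"
proof
  let ?d = "LEAST d. 0 < d \<and> (f ^^ d) x = x"
  show "least_period f x ?d"
    unfolding least_period_def using assms
    by (metis (mono_tags, lifting) LeastI not_less_Least)
  show "?d \<le> n"
    using assms by (intro Least_le) simp
qed

lemma cong_pow_eq_1_iff_ord_dvd:
  fixes a n :: int
  assumes "n > 0"
  shows "[a ^ m = 1] (mod n) \<longleftrightarrow> ord (nat n) (nat (a mod n)) dvd m"
proof -
  have "[a ^ m = 1] (mod n) \<longleftrightarrow> [(a mod n) ^ m = 1] (mod n)"
    by (simp add: cong_def power_mod)
  also have "\<dots> \<longleftrightarrow> [int (nat (a mod n) ^ m) = int 1] (mod int (nat n))"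
    using assms by simp
  also have "\<dots> \<longleftrightarrow> ord (nat n) (nat (a mod n)) dvd m"
    by (simp only: cong_int_iff ord_divides)
  finally show ?thesis .
qed

definition subadd :: "int \<times> int \<Rightarrow> int \<times> int" where
  "subadd u = (fst u - snd u, fst u + snd u)"

lemma subadd_funpow_4_mult:
  "(subadd ^^ (4 * m)) u = ((-4) ^ m * fst u, (-4) ^ m * snd u)"
proof (induction m)
  case (Suc m)
  have "(subadd ^^ 4) v = (-4 * fst v, -4 * snd v)" for v
    by (simp add: numeral_eq_Suc subadd_def)
  then show ?case
    by (simp add: funpow_add Suc.IH)
qed simp

lemma subadd_funpow_2: "(subadd ^^ 2) u = (- 2 * snd u, 2 * fst u)"
  by (simp add: numeral_eq_Suc subadd_def)

lemma subadd_funpow_4_mult_add_2: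
  "(subadd ^^ (4 * m + 2)) u = (- 2 * (-4) ^ m * snd u, 2 * (-4) ^ m * fst u)"
  by (simp only: add.commute[of "4 * m"] funpow_add comp_apply subadd_funpow_2 subadd_funpow_4_mult)
    (simp add: algebra_simps)

lemma mat_pow_subadd_matrix:
  "mat_pow subadd_matrix n =
     (let (a, b) = (subadd ^^ n) (1, 0) in (\<chi> i j. if i = j then a else if i = 1 then - b else b))"
proof (induction n)
  case 0
  show ?case
    by (simp add: vec_eq_iff mat_def forall_2)
next
  case (Suc n)
  then show ?case
    by (simp add: vec_eq_iff forall_2 matrix_matrix_mult_def sum_2 subadd_matrix_def subadd_def
        split_def Let_def)
qed

lemma mat_pow_subadd_matrix_cong_id_iff:
  "(\<forall>i j. [mat_pow subadd_matrix k $ i $ j = mat 1 $ i $ j] (mod p)) \<longleftrightarrow>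
     [fst ((subadd ^^ k) (1, 0)) = 1] (mod p) \<and> [snd ((subadd ^^ k) (1, 0)) = 0] (mod p)"
  by (auto simp: mat_pow_subadd_matrix split_def Let_def forall_2 mat_def cong_0_iff)

lemma coprime_neg4_if_odd:
  fixes p :: int
  assumes "odd p"
  shows "coprime p (-4)"
proof -
  have "coprime p 2"
    using assms coprime_commute coprime_left_2_iff_odd by blast
  then have "coprime p (2 * 2)"
    by (simp only: coprime_mult_right_iff)
  then show ?thesis
    by simp
qed

lemma odd_prime_not_dvd_2_mult_neg4_pow:
  fixes p :: int
  assumes "prime p" and "odd p"
  shows "\<not> p dvd 2 * (-4) ^ m"
proof
  assume "p dvd 2 * (-4) ^ m"
  moreover have "coprime p (2 * (-4) ^ m)"
    using coprime_neg4_if_odd[OF assms(2)] assms(2) coprime_left_2_iff_odd coprime_commute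
    by (metis coprime_mult_right_iff coprime_power_right_iff)
  ultimately have "is_unit p"
    using coprime_absorb_left by blast
  with assms(1) show False
    using not_prime_unit by blast
qed

lemma mat_pow_subadd_matrix_cong_id_iff_neg4_pow:
  fixes p :: int
  assumes "prime p" and "odd p"
  shows "(\<forall>i j. [mat_pow subadd_matrix k $ i $ j = mat 1 $ i $ j] (mod p)) \<longleftrightarrow>
           4 dvd k \<and> [(-4) ^ (k div 4) = 1] (mod p)"
proof -
  define c :: int where "c = (-4) ^ (k div 4)"
  have "(subadd ^^ k) (1, 0) = (subadd ^^ (k mod 4 + 4 * (k div 4))) (1, 0)"
    by simp
  also have "\<dots> = (subadd ^^ (k mod 4)) (c, 0)"
    by (simp only: funpow_add comp_apply subadd_funpow_4_mult c_def) simp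
  finally have orbit: "(subadd ^^ k) (1, 0) = (subadd ^^ (k mod 4)) (c, 0)" .
  have "\<not> p dvd 2 * c"
    unfolding c_def using assms by (rule odd_prime_not_dvd_2_mult_neg4_pow)
  then have nd: "\<not> p dvd 2 * c" "\<not> p dvd c" "\<not> [0 = 1] (mod p)"
    using assms(1) not_prime_unit by (auto simp: cong_sym_eq cong_0_iff)
  have lhs: "(\<forall>i j. [mat_pow subadd_matrix k $ i $ j = mat 1 $ i $ j] (mod p)) \<longleftrightarrow>
      [fst ((subadd ^^ (k mod 4)) (c, 0)) = 1] (mod p) \<and> [snd ((subadd ^^ (k mod 4)) (c, 0)) = 0] (mod p)"
    by (simp add: mat_pow_subadd_matrix_cong_id_iff orbit)
  consider "k mod 4 = 0" | "k mod 4 = 1" | "k mod 4 = 2" | "k mod 4 = 3"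
    by linarith
  then show ?thesis
  proof cases
    case 1
    then show ?thesis
      using lhs by (simp add: c_def dvd_eq_mod_eq_0)
  next
    case 2
    have "(subadd ^^ 1) (c, 0) = (c, c)"
      by (simp add: subadd_def)
    then show ?thesis
      using lhs 2 nd by (simp add: cong_0_iff dvd_eq_mod_eq_0)
  next
    case 3
    have "(subadd ^^ 2) (c, 0) = (0, 2 * c)"
      by (simp add: subadd_funpow_2)
    then show ?thesis
      using lhs 3 nd by (simp add: dvd_eq_mod_eq_0)
  next
    case 4
    have "(subadd ^^ 3) (c, 0) = (- 2 * c, 2 * c)"
      by (simp add: numeral_eq_Suc subadd_def)
    then show ?thesis
      using lhs 4 nd by (simp add: cong_0_iff dvd_eq_mod_eq_0)
  qed
qed

(* The paper's t. Since ord is defined on nat, -4 is replaced by its residue. *)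
definition ord_neg4 :: "int \<Rightarrow> nat" where
  "ord_neg4 p = ord (nat p) (nat ((-4) mod p))"

lemma ord_neg4_pos:
  fixes p :: int
  assumes "prime p" and "odd p"
  shows "ord_neg4 p > 0"
proof -
  have p: "p > 0"
    using assms(1) prime_gt_0_int by blast
  have "coprime p ((-4) mod p)"
    using coprime_neg4_if_odd[OF assms(2)] p by simp
  then have "coprime (nat p) (nat ((-4) mod p))"
    using p by (simp flip: coprime_int_iff)
  then show ?thesis
    by (simp add: ord_neg4_def)
qed

lemma cong_neg4_pow_eq_1_iff:
  fixes p :: int
  assumes "p > 0"
  shows "[(-4) ^ m = 1] (mod p) \<longleftrightarrow> ord_neg4 p dvd m"
  unfolding ord_neg4_def using assms by (rule cong_pow_eq_1_iff_ord_dvd)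

lemma zp_order_eq:
  fixes p :: int
  assumes "prime p" and "odd p"
  shows "zp_order p = 4 * ord_neg4 p"
proof -
  have p: "p > 0"
    using assms(1) prime_gt_0_int by blast
  have "(\<forall>i j. [mat_pow subadd_matrix k $ i $ j = mat 1 $ i $ j] (mod p)) \<longleftrightarrow> 4 * ord_neg4 p dvd k"
    for k
    using mat_pow_subadd_matrix_cong_id_iff_neg4_pow[OF assms] cong_neg4_pow_eq_1_iff[OF p] by auto
  then have "zp_order p = (LEAST k. 0 < k \<and> 4 * ord_neg4 p dvd k)"
    by (simp add: zp_order_def)
  also have "\<dots> = 4 * ord_neg4 p"
    using ord_neg4_pos[OF assms] by (intro Least_equality) (auto dest: dvd_imp_le)
  finally show ?thesis .
qed

definition gamma_step :: "int \<Rightarrow> int \<times> int \<Rightarrow> int \<times> int" where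
  "gamma_step p u = ((fst u - snd u) mod p, (fst u + snd u) mod p)"

lemma gamma_arc_iff: "gamma_arc p u v \<longleftrightarrow> u \<in> gamma_vertices p \<and> v = gamma_step p u"
  by (simp add: gamma_arc_def gamma_step_def)

lemma gamma_step_funpow_in_vertices:
  assumes "p > 0" and "u \<in> gamma_vertices p"
  shows "(gamma_step p ^^ n) u \<in> gamma_vertices p"
  using assms by (induction n) (auto simp: gamma_step_def gamma_vertices_def)

lemma gamma_step_funpow:
  assumes "u \<in> gamma_vertices p"
  shows "(gamma_step p ^^ n) u = (fst ((subadd ^^ n) u) mod p, snd ((subadd ^^ n) u) mod p)"
proof (induction n)
  case 0
  then show ?case
    using assms by (auto simp: gamma_vertices_def)
next
  case (Suc n)
  then show ?case
    by (simp add: gamma_step_def subadd_def mod_diff_eq mod_add_eq)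
qed

lemma residue_dvd_iff_eq_0:
  fixes a p :: int
  assumes "0 \<le> a" and "a < p"
  shows "p dvd a \<longleftrightarrow> a = 0"
proof
  assume "p dvd a"
  then have "a mod p = 0"
    by simp
  then show "a = 0"
    using assms by (simp add: mod_pos_pos_trivial)
qed simp

lemma gamma_step_eq_self_iff:
  assumes "u \<in> gamma_vertices p"
  shows "gamma_step p u = u \<longleftrightarrow> u = (0, 0)"
proof
  assume fixed: "gamma_step p u = u"
  obtain a b where u: "u = (a, b)" and "0 \<le> a" "a < p" "0 \<le> b" "b < p"
    using assms by (auto simp: gamma_vertices_def)
  have "(a - b) mod p = a" "(a + b) mod p = b"
    using fixed by (simp_all add: gamma_step_def u)
  then have "p dvd b"
    using \<open>0 \<le> a\<close> \<open>a < p\<close> mod_eq_dvd_iff[of "a - b" p a] by simp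
  then have "b = 0"
    using \<open>0 \<le> b\<close> \<open>b < p\<close> residue_dvd_iff_eq_0 by blast
  moreover from this have "a = 0"
    using \<open>(a + b) mod p = b\<close> \<open>0 \<le> a\<close> \<open>a < p\<close> by (simp add: mod_pos_pos_trivial)
  ultimately show "u = (0, 0)"
    by (simp add: u)
qed (simp add: gamma_step_def)

lemma prime_cong_mult_self_iff:
  fixes p :: int
  assumes "prime p"
  shows "[c * a = a] (mod p) \<longleftrightarrow> [c = 1] (mod p) \<or> p dvd a"
proof -
  have "[c * a = a] (mod p) \<longleftrightarrow> p dvd (c - 1) * a"
    by (simp add: cong_iff_dvd_diff algebra_simps)
  also have "\<dots> \<longleftrightarrow> [c = 1] (mod p) \<or> p dvd a"
    using assms by (simp add: prime_dvd_mult_iff cong_iff_dvd_diff)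
  finally show ?thesis .
qed

lemma gamma_step_funpow_4_mult_eq_self_iff:
  fixes p :: int
  assumes "prime p" and "u \<in> gamma_vertices p" and "u \<noteq> (0, 0)"
  shows "(gamma_step p ^^ (4 * m)) u = u \<longleftrightarrow> ord_neg4 p dvd m"
proof -
  obtain a b where u: "u = (a, b)" and "0 \<le> a" "a < p" "0 \<le> b" "b < p"
    using assms(2) by (auto simp: gamma_vertices_def)
  have "p dvd a \<longleftrightarrow> a = 0" "p dvd b \<longleftrightarrow> b = 0"
    using \<open>0 \<le> a\<close> \<open>a < p\<close> \<open>0 \<le> b\<close> \<open>b < p\<close> by (simp_all add: residue_dvd_iff_eq_0)
  have "(gamma_step p ^^ (4 * m)) u = u \<longleftrightarrow>
      [(-4) ^ m * a = a] (mod p) \<and> [(-4) ^ m * b = b] (mod p)"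
    using assms(2) \<open>0 \<le> a\<close> \<open>a < p\<close> \<open>0 \<le> b\<close> \<open>b < p\<close>
    by (simp add: gamma_step_funpow subadd_funpow_4_mult u cong_def)
  also have "\<dots> \<longleftrightarrow> [(-4) ^ m = 1] (mod p)"
    using assms(3) \<open>p dvd a \<longleftrightarrow> a = 0\<close> \<open>p dvd b \<longleftrightarrow> b = 0\<close>
    by (auto simp: prime_cong_mult_self_iff[OF assms(1)] u)
  also have "\<dots> \<longleftrightarrow> ord_neg4 p dvd m"
    using cong_neg4_pow_eq_1_iff prime_gt_0_int[OF assms(1)] by blast
  finally show ?thesis .
qed

lemma directed_cycle_least_period:
  assumes "directed_cycle p vs"
  shows "hd vs \<in> gamma_vertices p" and "least_period (gamma_step p) (hd vs) (length vs)"
proof -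
  let ?f = "gamma_step p" and ?L = "length vs"
  have "vs \<noteq> []" and "distinct vs" and "set vs \<subseteq> gamma_vertices p"
    using assms by (auto simp: directed_cycle_def)
  then have L: "0 < ?L" and hd: "hd vs = vs ! 0"
    by (simp_all add: hd_conv_nth)
  have step: "vs ! ((i + 1) mod ?L) = ?f (vs ! i)" if "i < ?L" for i
    using assms that by (simp add: directed_cycle_def gamma_arc_iff)
  have orbit: "vs ! i = (?f ^^ i) (hd vs)" if "i < ?L" for i
    using that
  proof (induction i)
    case 0
    then show ?case
      by (simp add: hd)
  next
    case (Suc i)
    then show ?case
      using step[of i] by simp
  qed
  show "hd vs \<in> gamma_vertices p"
    using \<open>vs \<noteq> []\<close> \<open>set vs \<subseteq> gamma_vertices p\<close> hd_in_set by blast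
  have "(?f ^^ ?L) (hd vs) = ?f (vs ! (?L - 1))"
    using L orbit[of "?L - 1"] by (metis Suc_diff_1 diff_less funpow.simps(2) o_apply zero_less_one)
  also have "\<dots> = hd vs"
    using L step[of "?L - 1"] by (simp add: hd)
  finally have "(?f ^^ ?L) (hd vs) = hd vs" .
  moreover have "(?f ^^ j) (hd vs) \<noteq> hd vs" if "0 < j" "j < ?L" for j
  proof -
    have "vs ! j \<noteq> vs ! 0"
      using that L \<open>distinct vs\<close> by (simp add: nth_eq_iff_index_eq)
    then show ?thesis
      using that orbit[of j] by (simp add: hd)
  qed
  ultimately show "least_period ?f (hd vs) ?L"
    using L by (simp add: least_period_def)
qed

lemma least_period_directed_cycle:
  assumes "p > 0" and "x \<in> gamma_vertices p" and "least_period (gamma_step p) x d"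
  shows "directed_cycle p (map (\<lambda>i. (gamma_step p ^^ i) x) [0..<d])"
    (is "directed_cycle p ?vs")
proof -
  let ?f = "gamma_step p"
  have d: "0 < d" and period: "(?f ^^ d) x = x"
    using assms(3) by (simp_all add: least_period_def)
  have shift: "d dvd d - j + i" if "i < d" "j < d" "(?f ^^ i) x = (?f ^^ j) x" for i j
  proof -
    have "(?f ^^ (d - j + i)) x = (?f ^^ (d - j)) ((?f ^^ j) x)"
      using that(3) by (simp add: funpow_add)
    also have "\<dots> = (?f ^^ (d - j + j)) x"
      by (simp add: funpow_add)
    also have "\<dots> = x"
      using that(2) period by simp
    finally show ?thesis
      using least_period_dvd_iff[OF assms(3)] by blast
  qed
  have "inj_on (\<lambda>i. (?f ^^ i) x) {0..<d}"
  proof (rule inj_onI)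
    fix i j
    assume "i \<in> {0..<d}" "j \<in> {0..<d}" "(?f ^^ i) x = (?f ^^ j) x"
    then have "d dvd d - j + i" "d dvd d - i + j"
      using shift by auto
    with \<open>i \<in> {0..<d}\<close> \<open>j \<in> {0..<d}\<close> show "i = j"
      by (auto dest!: dvd_imp_le)
  qed
  then have "distinct ?vs"
    by (simp add: distinct_map)
  moreover have "set ?vs \<subseteq> gamma_vertices p"
    using assms(1,2) by (auto simp: gamma_step_funpow_in_vertices)
  moreover have "gamma_arc p (?vs ! i) (?vs ! ((i + 1) mod length ?vs))" if "i < length ?vs" for i
  proof -
    have "(?f ^^ ((i + 1) mod d)) x = ?f ((?f ^^ i) x)"
      using funpow_mod_eq[OF period] by simp
    then show ?thesis
      using that d assms(1,2) gamma_step_funpow_in_vertices by (simp add: gamma_arc_iff)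
  qed
  ultimately show ?thesis
    using d by (simp add: directed_cycle_def)
qed

lemma ex_secondary_cycle_iff:
  assumes "p > 0"
  shows "(\<exists>vs. secondary_cycle p vs) \<longleftrightarrow>
    (\<exists>x \<in> gamma_vertices p. \<exists>d. least_period (gamma_step p) x d \<and> d \<noteq> zp_order p \<and> d \<noteq> 1)"
proof
  assume "\<exists>vs. secondary_cycle p vs"
  then obtain vs where "secondary_cycle p vs" ..
  then show "\<exists>x \<in> gamma_vertices p. \<exists>d. least_period (gamma_step p) x d \<and> d \<noteq> zp_order p \<and> d \<noteq> 1"
    using directed_cycle_least_period unfolding secondary_cycle_def by blast
next
  assume "\<exists>x \<in> gamma_vertices p. \<exists>d. least_period (gamma_step p) x d \<and> d \<noteq> zp_order p \<and> d \<noteq> 1"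
  then obtain x d where "x \<in> gamma_vertices p" "least_period (gamma_step p) x d" "d \<noteq> zp_order p" "d \<noteq> 1"
    by blast
  then have "secondary_cycle p (map (\<lambda>i. (gamma_step p ^^ i) x) [0..<d])"
    using least_period_directed_cycle[OF assms] by (simp add: secondary_cycle_def)
  then show "\<exists>vs. secondary_cycle p vs" ..
qed

lemma dvd_2_mult_if_proper_dvd_4_mult:
  fixes d t :: nat
  assumes "t dvd d" and "d dvd 4 * t" and "d \<noteq> 4 * t"
  shows "d dvd 2 * t"
proof -
  obtain m where d: "d = t * m"
    using assms(1) ..
  have "t > 0"
    using assms(2,3) by (auto simp: d)
  then have "m dvd 4"
    using assms(2) by (simp add: d mult.commute[of 4])
  moreover have "m \<noteq> 4"
    using assms(3) by (auto simp: d)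
  moreover have "m \<le> 4"
    using \<open>m dvd 4\<close> by (simp add: dvd_imp_le)
  moreover have "m \<in> {0, 1, 2, 3, 4}"
    using \<open>m \<le> 4\<close> by auto
  ultimately have "m dvd 2"
    by auto
  then show ?thesis
    by (simp add: d mult.commute[of 2])
qed

lemma nonzero_vertex_least_period_dvd:
  fixes p :: int
  assumes "prime p" and "odd p" and "x \<in> gamma_vertices p" and "x \<noteq> (0, 0)"
    and "least_period (gamma_step p) x d"
  shows "ord_neg4 p dvd d" and "d dvd 4 * ord_neg4 p"
proof -
  have "(gamma_step p ^^ (4 * d)) x = x"
    using least_period_dvd_iff[OF assms(5)] by simp
  then show "ord_neg4 p dvd d"
    using gamma_step_funpow_4_mult_eq_self_iff[OF assms(1,3,4)] by blast
  have "(gamma_step p ^^ (4 * ord_neg4 p)) x = x"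
    using gamma_step_funpow_4_mult_eq_self_iff[OF assms(1,3,4), of "ord_neg4 p"] by simp
  then show "d dvd 4 * ord_neg4 p"
    using least_period_dvd_iff[OF assms(5)] by blast
qed

lemma least_period_eq_4_mult_ord_neg4_if_even:
  fixes p :: int
  assumes "prime p" and "odd p" and "even (ord_neg4 p)"
    and "x \<in> gamma_vertices p" and "least_period (gamma_step p) x d" and "d \<noteq> 1"
  shows "d = 4 * ord_neg4 p"
proof (rule ccontr)
  assume "d \<noteq> 4 * ord_neg4 p"
  let ?t = "ord_neg4 p"
  obtain s where t: "?t = 2 * s"
    using assms(3) ..
  have "x \<noteq> (0, 0)"
  proof
    assume "x = (0, 0)"
    then have "(gamma_step p ^^ 1) x = x"
      by (simp add: gamma_step_def)
    then show False
      using least_period_dvd_iff[OF assms(5), of 1] assms(6) by simp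
  qed
  then have "?t dvd d" "d dvd 4 * ?t"
    using nonzero_vertex_least_period_dvd[OF assms(1,2,4) _ assms(5)] by blast+
  then have "d dvd 2 * ?t"
    using \<open>d \<noteq> 4 * ?t\<close> by (intro dvd_2_mult_if_proper_dvd_4_mult)
  then have "d dvd 4 * s"
    by (simp add: t)
  then have "(gamma_step p ^^ (4 * s)) x = x"
    using least_period_dvd_iff[OF assms(5)] by blast
  then have "?t dvd s"
    using gamma_step_funpow_4_mult_eq_self_iff[OF assms(1,4) \<open>x \<noteq> (0, 0)\<close>] by blast
  then show False
    using ord_neg4_pos[OF assms(1,2)] t by (auto dest: dvd_imp_le)
qed

lemma short_least_period_if_odd_ord_neg4:
  fixes p :: int
  assumes "prime p" and "odd p" and "odd (ord_neg4 p)"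
  obtains x d where "x \<in> gamma_vertices p" and "least_period (gamma_step p) x d"
    and "d \<noteq> 1" and "d \<le> 2 * ord_neg4 p"
proof -
  let ?t = "ord_neg4 p"
  obtain s where t: "?t = 2 * s + 1"
    using assms(3) oddE by blast
  have p: "p > 2"
    using assms(1,2) prime_ge_2_int[of p] by (cases "p = 2") auto
  define c :: int where "c = 2 * (-4) ^ s"
  define x where "x = (1 :: int, c mod p)"
  have x: "x \<in> gamma_vertices p"
    using p by (simp add: x_def gamma_vertices_def)
  have "(- (c * (c mod p))) mod p = (- (c * c)) mod p"
    by (metis mod_minus_eq mod_mult_right_eq)
  also have "\<dots> = (-4) ^ ?t mod p"
    by (simp add: t c_def power_add power_mult power2_eq_square algebra_simps)
  also have "\<dots> = 1"
    using cong_neg4_pow_eq_1_iff[of p ?t] p by (simp add: cong_def)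
  finally have c: "(- (c * (c mod p))) mod p = 1" .
  have "(subadd ^^ (2 * ?t)) x = (subadd ^^ (4 * s + 2)) x"
    by (simp add: t)
  also have "\<dots> = (- (c * (c mod p)), c)"
    by (simp only: subadd_funpow_4_mult_add_2) (simp add: x_def c_def)
  finally have "(gamma_step p ^^ (2 * ?t)) x = ((- (c * (c mod p))) mod p, c mod p)"
    using x by (simp add: gamma_step_funpow)
  also have "\<dots> = x"
    using c by (simp add: x_def)
  finally have "(gamma_step p ^^ (2 * ?t)) x = x" .
  moreover have "0 < 2 * ?t"
    using ord_neg4_pos[OF assms(1,2)] by simp
  ultimately obtain d where "least_period (gamma_step p) x d" "d \<le> 2 * ?t"
    by (rule least_period_exists)
  moreover have "d \<noteq> 1"
  proof
    assume "d = 1"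
    then have "gamma_step p x = x"
      using \<open>least_period (gamma_step p) x d\<close> by (simp add: least_period_def)
    then show False
      using gamma_step_eq_self_iff[OF x] by (simp add: x_def)
  qed
  ultimately show ?thesis
    using x that by blast
qed

lemma ex_secondary_period_iff_odd_ord_neg4:
  fixes p :: int
  assumes "prime p" and "odd p"
  shows "(\<exists>x \<in> gamma_vertices p. \<exists>d. least_period (gamma_step p) x d \<and> d \<noteq> 4 * ord_neg4 p \<and> d \<noteq> 1)
    \<longleftrightarrow> odd (ord_neg4 p)"
proof
  assume "\<exists>x \<in> gamma_vertices p. \<exists>d. least_period (gamma_step p) x d \<and> d \<noteq> 4 * ord_neg4 p \<and> d \<noteq> 1"
  then show "odd (ord_neg4 p)"
    using least_period_eq_4_mult_ord_neg4_if_even[OF assms] by blast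
next
  assume "odd (ord_neg4 p)"
  then obtain x d where "x \<in> gamma_vertices p" "least_period (gamma_step p) x d"
    "d \<noteq> 1" "d \<le> 2 * ord_neg4 p"
    using short_least_period_if_odd_ord_neg4[OF assms] by blast
  moreover have "d \<noteq> 4 * ord_neg4 p"
    using \<open>d \<le> 2 * ord_neg4 p\<close> ord_neg4_pos[OF assms] by simp
  ultimately show "\<exists>x \<in> gamma_vertices p. \<exists>d. least_period (gamma_step p) x d \<and> d \<noteq> 4 * ord_neg4 p \<and> d \<noteq> 1"
    by blast
qed

theorem corollary7p3:
  fixes p :: int
  assumes "prime p" and "odd p"
  shows "(\<exists>vs. secondary_cycle p vs) \<longleftrightarrow> \<not> (8 dvd zp_order p)"
proof -
  have "p > 0"
    using assms(1) prime_gt_0_int by blast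
  then have "(\<exists>vs. secondary_cycle p vs) \<longleftrightarrow>
      (\<exists>x \<in> gamma_vertices p. \<exists>d. least_period (gamma_step p) x d \<and> d \<noteq> 4 * ord_neg4 p \<and> d \<noteq> 1)"
    unfolding zp_order_eq[OF assms, symmetric] by (rule ex_secondary_cycle_iff)
  also have "\<dots> \<longleftrightarrow> odd (ord_neg4 p)"
    by (rule ex_secondary_period_iff_odd_ord_neg4[OF assms])
  finally have "(\<exists>vs. secondary_cycle p vs) \<longleftrightarrow> odd (ord_neg4 p)" .
  moreover have "8 dvd zp_order p \<longleftrightarrow> even (ord_neg4 p)"
    unfolding zp_order_eq[OF assms] by presburger
  ultimately show ?thesis
    by blast
qed

end
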